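(* Let $X=\Delta[2]/\partial\Delta[2]$. Then $DSd\,X\cong\Delta[1]$.
   Context: $Sd$ is the Kan (normal) subdivision functor on simplicial sets: the left Kan extension along the Yoneda embedding of $[n]\mapsto N(\text{poset of non-empty subsets of }[n])$; it commutes with colimits and preserves degreewise injective maps. $\Delta[2]/\partial\Delta[2]$ is the pushout of $\Delta[0]\leftarrow\partial\Delta[2]\to\Delta[2]$. A simplicial set is non-singular if every non-degenerate simplex has degreewise injective representing map. The desingularization $DY$ is the image of $Y\to\prod_f Z$, $y\mapsto(f(y))_f$, over all quotient maps $f:Y\to Z$ (maps $Y\to Y/R$ for operator-compatible families of equivalence relations) with $Z$ non-singular. *)

theory Defs
  imports Main
begin

text \<open>A simplicial set is given by its sets of n-simplices sobj X n and, for every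
monotone map alpha : [m] -> [n], the simplicial operator smap X n m alpha : X_n -> X_m.
Monotone maps [m] -> [n] are represented extensionally as functions nat => nat
that are 0 outside {0..m}.\<close>

record 'a sset =
  sobj :: "nat \<Rightarrow> 'a set"
  smap :: "nat \<Rightarrow> nat \<Rightarrow> (nat \<Rightarrow> nat) \<Rightarrow> 'a \<Rightarrow> 'a"

definition opmap :: "nat \<Rightarrow> nat \<Rightarrow> (nat \<Rightarrow> nat) set" where
  "opmap m n = {\<alpha>. (\<forall>i\<le>m. \<alpha> i \<le> n) \<and> (\<forall>i j. i \<le> j \<longrightarrow> j \<le> m \<longrightarrow> \<alpha> i \<le> \<alpha> j)
                   \<and> (\<forall>i>m. \<alpha> i = 0)}"

definition idop :: "nat \<Rightarrow> nat \<Rightarrow> nat" where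
  "idop n = (\<lambda>i. if i \<le> n then i else 0)"

definition ocomp :: "nat \<Rightarrow> (nat \<Rightarrow> nat) \<Rightarrow> (nat \<Rightarrow> nat) \<Rightarrow> nat \<Rightarrow> nat" where
  "ocomp k \<alpha> \<beta> = (\<lambda>i. if i \<le> k then \<alpha> (\<beta> i) else 0)"

definition is_sset :: "'a sset \<Rightarrow> bool" where
  "is_sset X \<longleftrightarrow>
     (\<forall>n m \<alpha> x. \<alpha> \<in> opmap m n \<longrightarrow> x \<in> sobj X n \<longrightarrow> smap X n m \<alpha> x \<in> sobj X m)
   \<and> (\<forall>n x. x \<in> sobj X n \<longrightarrow> smap X n n (idop n) x = x)
   \<and> (\<forall>n m k \<alpha> \<beta> x. \<alpha> \<in> opmap m n \<longrightarrow> \<beta> \<in> opmap k m \<longrightarrow> x \<in> sobj X n \<longrightarrow>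
        smap X m k \<beta> (smap X n m \<alpha> x) = smap X n k (ocomp k \<alpha> \<beta>) x)"

definition sset_iso :: "'a sset \<Rightarrow> 'b sset \<Rightarrow> (nat \<Rightarrow> 'a \<Rightarrow> 'b) \<Rightarrow> bool" where
  "sset_iso X Y f \<longleftrightarrow>
     (\<forall>n. bij_betw (f n) (sobj X n) (sobj Y n))
   \<and> (\<forall>n m \<alpha> x. \<alpha> \<in> opmap m n \<longrightarrow> x \<in> sobj X n \<longrightarrow>
        f m (smap X n m \<alpha> x) = smap Y n m \<alpha> (f n x))"

definition Delta :: "nat \<Rightarrow> (nat \<Rightarrow> nat) sset" where
  "Delta n = \<lparr> sobj = (\<lambda>k. opmap k n), smap = (\<lambda>k m \<alpha> f. ocomp m f \<alpha>) \<rparr>"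

definition bdry :: "nat \<Rightarrow> nat \<Rightarrow> (nat \<Rightarrow> nat) set" where
  "bdry n k = {f \<in> opmap k n. f ` {0..k} \<noteq> {0..n}}"

text \<open>Pushout of Delta[0] <- A -> X for a simplicial subset A of X (written X/A):
the simplices of X not in A, plus one extra simplex None in each degree (from Delta[0]).\<close>
definition collapse :: "'a sset \<Rightarrow> (nat \<Rightarrow> 'a set) \<Rightarrow> 'a option sset" where
  "collapse X A = \<lparr> sobj = (\<lambda>n. Some ` (sobj X n - A n) \<union> {None}),
     smap = (\<lambda>n m \<alpha> u. case u of None \<Rightarrow> None
               | Some x \<Rightarrow> (let y = smap X n m \<alpha> x in if y \<in> A m then None else Some y)) \<rparr>"

text \<open>k-simplices of the nerve of the poset of non-empty subsets of [n]:
chains c 0 <= ... <= c k of non-empty subsets of {0..n}.\<close>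
definition chains :: "nat \<Rightarrow> nat \<Rightarrow> (nat \<Rightarrow> nat set) set" where
  "chains n k = {c. (\<forall>i\<le>k. c i \<noteq> {} \<and> c i \<subseteq> {0..n}) \<and> (\<forall>i j. i \<le> j \<longrightarrow> j \<le> k \<longrightarrow> c i \<subseteq> c j)
                   \<and> (\<forall>i>k. c i = {})}"

definition cpush :: "(nat \<Rightarrow> nat) \<Rightarrow> nat \<Rightarrow> (nat \<Rightarrow> nat set) \<Rightarrow> nat \<Rightarrow> nat set" where
  "cpush \<alpha> k c = (\<lambda>i. if i \<le> k then \<alpha> ` c i else {})"

definition creindex :: "nat \<Rightarrow> (nat \<Rightarrow> nat) \<Rightarrow> (nat \<Rightarrow> nat set) \<Rightarrow> nat \<Rightarrow> nat set" where
  "creindex k' \<beta> c = (\<lambda>i. if i \<le> k' then c (\<beta> i) else {})"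

text \<open>Sd X = colimit over the simplex category of X of Sd Delta[n] (the left Kan extension
along Yoneda), computed by the usual coend formula: k-simplices are triples (n, x, c) with
x an n-simplex of X and c a k-chain in [n], modulo the equivalence relation generated by
(n', x, alpha_* c) ~ (n, alpha^* x, c).\<close>
definition sd_dom :: "'a sset \<Rightarrow> nat \<Rightarrow> (nat \<times> 'a \<times> (nat \<Rightarrow> nat set)) set" where
  "sd_dom X k = {(n, x, c). x \<in> sobj X n \<and> c \<in> chains n k}"

definition sd_gen :: "'a sset \<Rightarrow> nat \<Rightarrow> ((nat \<times> 'a \<times> (nat \<Rightarrow> nat set)) \<times> (nat \<times> 'a \<times> (nat \<Rightarrow> nat set))) set" where
  "sd_gen X k = {((n', x, cpush \<alpha> k c), (n, smap X n' n \<alpha> x, c)) | n n' \<alpha> x c.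
                   \<alpha> \<in> opmap n n' \<and> x \<in> sobj X n' \<and> c \<in> chains n k}"

definition sd_rel :: "'a sset \<Rightarrow> nat \<Rightarrow> ((nat \<times> 'a \<times> (nat \<Rightarrow> nat set)) \<times> (nat \<times> 'a \<times> (nat \<Rightarrow> nat set))) set" where
  "sd_rel X k = (sd_gen X k \<union> (sd_gen X k)\<inverse>)\<^sup>*"

definition Sd :: "'a sset \<Rightarrow> (nat \<times> 'a \<times> (nat \<Rightarrow> nat set)) set sset" where
  "Sd X = \<lparr> sobj = (\<lambda>k. {sd_rel X k `` {p} | p. p \<in> sd_dom X k}),
     smap = (\<lambda>k k' \<beta> C. sd_rel X k' `` {(case (SOME p. p \<in> C \<inter> sd_dom X k) of
                (n, x, c) \<Rightarrow> (n, x, creindex k' \<beta> c))}) \<rparr>"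

definition degenerate :: "'a sset \<Rightarrow> nat \<Rightarrow> 'a \<Rightarrow> bool" where
  "degenerate X n x \<longleftrightarrow> (\<exists>m \<alpha> y. m < n \<and> \<alpha> \<in> opmap n m \<and> y \<in> sobj X m \<and> x = smap X m n \<alpha> y)"

definition nonsingular :: "'a sset \<Rightarrow> bool" where
  "nonsingular X \<longleftrightarrow> (\<forall>n x. x \<in> sobj X n \<longrightarrow> \<not> degenerate X n x \<longrightarrow>
       (\<forall>k. inj_on (\<lambda>f. smap X n k f x) (opmap k n)))"

definition compat_eqrel :: "'a sset \<Rightarrow> (nat \<Rightarrow> ('a \<times> 'a) set) \<Rightarrow> bool" where
  "compat_eqrel Y R \<longleftrightarrow> (\<forall>n. equiv (sobj Y n) (R n))
     \<and> (\<forall>n m \<alpha> x y. \<alpha> \<in> opmap m n \<longrightarrow> (x, y) \<in> R n \<longrightarrow> (smap Y n m \<alpha> x, smap Y n m \<alpha> y) \<in> R m)"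

definition squot :: "'a sset \<Rightarrow> (nat \<Rightarrow> ('a \<times> 'a) set) \<Rightarrow> 'a set sset" where
  "squot Y R = \<lparr> sobj = (\<lambda>n. sobj Y n // R n),
     smap = (\<lambda>n m \<alpha> C. R m `` {smap Y n m \<alpha> (SOME x. x \<in> C)}) \<rparr>"

text \<open>The map Y -> prod_f Z, y |-> (f y)_f, over all quotient maps f : Y -> Y/R with Y/R
non-singular (the component at any other index is a dummy value {}).\<close>
definition dsing_vec :: "'a sset \<Rightarrow> nat \<Rightarrow> 'a \<Rightarrow> (nat \<Rightarrow> ('a \<times> 'a) set) \<Rightarrow> 'a set" where
  "dsing_vec Y n y = (\<lambda>R. if compat_eqrel Y R \<and> nonsingular (squot Y R) then R n `` {y} else {})"

definition Dsing :: "'a sset \<Rightarrow> ((nat \<Rightarrow> ('a \<times> 'a) set) \<Rightarrow> 'a set) sset" where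
  "Dsing Y = \<lparr> sobj = (\<lambda>n. dsing_vec Y n ` sobj Y n),
     smap = (\<lambda>n m \<alpha> t. dsing_vec Y m (smap Y n m \<alpha> (SOME y. y \<in> sobj Y n \<and> dsing_vec Y n y = t))) \<rparr>"

end

theory Submission
  imports Defs
begin

text \<open>
  Every simplex of Sd X, for X = Delta[2]/boundary, is represented by a chain d of non-empty
  subsets of [2] on the non-degenerate 2-simplex of X, and it is the basepoint unless the last
  member of d is all of [2].  Marking the members of d equal to [2] (the barycentre) gives a
  surjective simplicial map Sd X -> Delta[1], and its kernel has a non-singular quotient.
  Conversely, in a non-singular quotient of Sd X a triangle (A, B, [2]) with B a proper subset
  of [2] has both vertices A and B at the basepoint, so it must become degenerate.  This
  identifies every edge (A, [2]) with ({0}, [2]) and, since every chain is a reindexing of a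
  chain with three members, every simplex with the one determined by its marks.  So the kernel
  is the finest relation with non-singular quotient, and D Sd X is Delta[1].
\<close>

section \<open>Simplicial operators and chains\<close>

lemma opmapI:
  "(\<And>i. i \<le> m \<Longrightarrow> \<alpha> i \<le> n) \<Longrightarrow> (\<And>i j. i \<le> j \<Longrightarrow> j \<le> m \<Longrightarrow> \<alpha> i \<le> \<alpha> j)
    \<Longrightarrow> (\<And>i. m < i \<Longrightarrow> \<alpha> i = 0) \<Longrightarrow> \<alpha> \<in> opmap m n"
  by (auto simp: opmap_def)

lemma opmapD:
  "\<alpha> \<in> opmap m n \<Longrightarrow> i \<le> m \<Longrightarrow> \<alpha> i \<le> n"
  "\<alpha> \<in> opmap m n \<Longrightarrow> i \<le> j \<Longrightarrow> j \<le> m \<Longrightarrow> \<alpha> i \<le> \<alpha> j"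
  "\<alpha> \<in> opmap m n \<Longrightarrow> m < i \<Longrightarrow> \<alpha> i = 0"
  by (auto simp: opmap_def)

lemma ocomp_opmap: "\<alpha> \<in> opmap m n \<Longrightarrow> \<beta> \<in> opmap k m \<Longrightarrow> ocomp k \<alpha> \<beta> \<in> opmap k n"
  by (auto simp: opmap_def ocomp_def)

lemma idop_opmap: "idop n \<in> opmap n n"
  by (auto simp: idop_def opmap_def)

lemma ocomp_idop: "\<alpha> \<in> opmap m n \<Longrightarrow> ocomp m (idop n) \<alpha> = \<alpha>"
  by (auto simp: opmap_def ocomp_def idop_def fun_eq_iff)

lemma ocomp_image: "S \<subseteq> {0..m} \<Longrightarrow> ocomp m \<alpha> \<beta> ` S = \<alpha> ` \<beta> ` S"
  by (force simp: ocomp_def)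

lemma idop_image: "S \<subseteq> {0..n} \<Longrightarrow> idop n ` S = S"
  by (force simp: idop_def)

text \<open>coface n j : [n] -> [n+1] misses j, and codegen n j : [n+1] -> [n] hits j twice.\<close>
definition vertex :: "nat \<Rightarrow> nat \<Rightarrow> nat" where
  "vertex j = (\<lambda>i. if i = 0 then j else 0)"

definition coface :: "nat \<Rightarrow> nat \<Rightarrow> nat \<Rightarrow> nat" where
  "coface n j = (\<lambda>i. if i \<le> n then (if i < j then i else Suc i) else 0)"

definition codegen :: "nat \<Rightarrow> nat \<Rightarrow> nat \<Rightarrow> nat" where
  "codegen n j = (\<lambda>i. if i \<le> Suc n then (if i \<le> j then i else i - 1) else 0)"

lemma vertex_opmap: "j \<le> n \<Longrightarrow> vertex j \<in> opmap 0 n"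
  by (auto simp: vertex_def opmap_def)

lemma coface_opmap: "coface n j \<in> opmap n (Suc n)"
  by (auto simp: coface_def opmap_def)

lemma codegen_opmap: "j \<le> n \<Longrightarrow> codegen n j \<in> opmap (Suc n) n"
  by (auto simp: codegen_def opmap_def)

lemma coface_1_opmap: "coface 1 j \<in> opmap 1 2"
  using coface_opmap[of 1 j] by (simp add: numeral_2_eq_2)

lemma codegen_1_opmap: "j \<le> 1 \<Longrightarrow> codegen 1 j \<in> opmap 2 1"
  using codegen_opmap[of j 1] by (simp add: numeral_2_eq_2)

lemma coface_neq: "i \<le> n \<Longrightarrow> coface n j i \<noteq> j"
  by (simp add: coface_def)

lemma coface_codegen_fix:
  "x \<le> Suc n \<Longrightarrow> j \<le> Suc n \<Longrightarrow> x \<noteq> j \<Longrightarrow> ocomp (Suc n) (coface n j) (codegen n (j - 1)) x = x"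
  by (auto simp: ocomp_def coface_def codegen_def)

lemma inj_on_ocomp:
  assumes "\<And>i j. i < j \<Longrightarrow> j \<le> n \<Longrightarrow> g i \<noteq> g j"
  shows "inj_on (ocomp k g) (opmap k n)"
proof (rule inj_onI)
  fix f f' assume f: "f \<in> opmap k n" and f': "f' \<in> opmap k n" and gf: "ocomp k g f = ocomp k g f'"
  show "f = f'"
  proof
    fix i
    show "f i = f' i"
    proof (cases "i \<le> k")
      case True
      then have "g (f i) = g (f' i)" using fun_cong[OF gf, of i] by (simp add: ocomp_def)
      moreover have "f i \<le> n" "f' i \<le> n" using opmapD(1) f f' True by auto
      ultimately show ?thesis using assms by (metis linorder_neqE_nat)
    next
      case False
      then show ?thesis using opmapD(3)[OF f] opmapD(3)[OF f'] by simp
    qed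
  qed
qed

lemma ocomp_coface_codegen:
  assumes "\<alpha> \<in> opmap (Suc n) m" "i \<le> n" "\<alpha> i = \<alpha> (Suc i)"
  shows "ocomp (Suc n) (ocomp n \<alpha> (coface n (Suc i))) (codegen n i) = \<alpha>"
proof
  fix l
  show "ocomp (Suc n) (ocomp n \<alpha> (coface n (Suc i))) (codegen n i) l = \<alpha> l"
    using assms opmapD(3)[OF assms(1), of l]
    by (cases "l = Suc i") (auto simp: ocomp_def coface_def codegen_def)
qed

lemma opmap_adjacent_eq:
  assumes "\<alpha> \<in> opmap (Suc n) m" "m \<le> n"
  shows "\<exists>i\<le>n. \<alpha> i = \<alpha> (Suc i)"
proof (rule ccontr)
  assume "\<not> ?thesis"
  then have step: "\<alpha> i < \<alpha> (Suc i)" if "i \<le> n" for i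
    using that opmapD(2)[OF assms(1), of i "Suc i"] by fastforce
  have "j \<le> \<alpha> j" if "j \<le> Suc n" for j
    using that by (induction j) (auto dest: step)
  then show False using opmapD(1)[OF assms(1), of "Suc n"] assms(2) by force
qed

lemma chainsI:
  "(\<And>i. i \<le> k \<Longrightarrow> c i \<noteq> {}) \<Longrightarrow> (\<And>i. i \<le> k \<Longrightarrow> c i \<subseteq> {0..n})
    \<Longrightarrow> (\<And>i j. i \<le> j \<Longrightarrow> j \<le> k \<Longrightarrow> c i \<subseteq> c j) \<Longrightarrow> (\<And>i. k < i \<Longrightarrow> c i = {}) \<Longrightarrow> c \<in> chains n k"
  unfolding chains_def by blast

lemma chainsD:
  "c \<in> chains n k \<Longrightarrow> i \<le> k \<Longrightarrow> c i \<noteq> {}"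
  "c \<in> chains n k \<Longrightarrow> i \<le> k \<Longrightarrow> c i \<subseteq> {0..n}"
  "c \<in> chains n k \<Longrightarrow> i \<le> j \<Longrightarrow> j \<le> k \<Longrightarrow> c i \<subseteq> c j"
  "c \<in> chains n k \<Longrightarrow> k < i \<Longrightarrow> c i = {}"
  by (auto simp: chains_def)

lemma creindex_chains: "c \<in> chains n k \<Longrightarrow> \<beta> \<in> opmap k' k \<Longrightarrow> creindex k' \<beta> c \<in> chains n k'"
  by (auto simp: chains_def opmap_def creindex_def)

lemma cpush_chains: "c \<in> chains n k \<Longrightarrow> \<alpha> \<in> opmap n n' \<Longrightarrow> cpush \<alpha> k c \<in> chains n' k"
  unfolding chains_def opmap_def cpush_def by (auto 0 3 simp: subset_iff)

lemma creindex_cpush: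
  "\<beta> \<in> opmap k' k \<Longrightarrow> creindex k' \<beta> (cpush \<alpha> k c) = cpush \<alpha> k' (creindex k' \<beta> c)"
  by (auto simp: opmap_def creindex_def cpush_def fun_eq_iff)

lemma creindex_creindex:
  "\<gamma> \<in> opmap k'' k' \<Longrightarrow> creindex k'' \<gamma> (creindex k' \<beta> c) = creindex k'' (ocomp k'' \<beta> \<gamma>) c"
  by (auto simp: opmap_def creindex_def ocomp_def fun_eq_iff)

lemma creindex_idop: "c \<in> chains n k \<Longrightarrow> creindex k (idop k) c = c"
  by (auto simp: chains_def creindex_def idop_def fun_eq_iff)

lemma cpush_cpush:
  "c \<in> chains n k \<Longrightarrow> cpush f k (cpush \<alpha> k c) = cpush (ocomp n f \<alpha>) k c"
  by (auto simp: cpush_def fun_eq_iff ocomp_image chainsD(2))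

lemma cpush_idop: "c \<in> chains n k \<Longrightarrow> cpush (idop n) k c = c"
  by (auto simp: cpush_def fun_eq_iff idop_image chainsD(2,4))

definition chain_of :: "nat set list \<Rightarrow> nat \<Rightarrow> nat set" where
  "chain_of Ss = (\<lambda>i. if i < length Ss then Ss ! i else {})"

lemma chain_of_chains:
  assumes "Ss \<noteq> []" "sorted_wrt (\<subseteq>) Ss" "\<forall>S\<in>set Ss. S \<noteq> {} \<and> S \<subseteq> {0..n}" "k = length Ss - 1"
  shows "chain_of Ss \<in> chains n k"
  unfolding assms(4)
proof (rule chainsI)
  fix i j assume "i \<le> j" "j \<le> length Ss - 1"
  then show "chain_of Ss i \<subseteq> chain_of Ss j"
    using assms(1,2) by (cases "i = j") (auto simp: chain_of_def sorted_wrt_iff_nth_less)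
next
  fix i assume "i \<le> length Ss - 1"
  then have "i < length Ss" using assms(1) by (cases Ss) auto
  then show "chain_of Ss i \<noteq> {}" "chain_of Ss i \<subseteq> {0..n}"
    using assms(3) nth_mem by (auto simp: chain_of_def)
qed (use assms(1) in \<open>cases Ss, auto simp: chain_of_def\<close>)

lemma creindex_vertex_chain_of:
  "j < length Ss \<Longrightarrow> creindex 0 (vertex j) (chain_of Ss) = chain_of [Ss ! j]"
  by (auto simp: creindex_def vertex_def chain_of_def fun_eq_iff)

lemma creindex_coface_chain_of:
  "length Ss = Suc (Suc n) \<Longrightarrow> j \<le> Suc n \<Longrightarrow>
    creindex n (coface n j) (chain_of Ss) = chain_of (take j Ss @ drop (Suc j) Ss)"
  by (auto simp: creindex_def coface_def chain_of_def fun_eq_iff nth_append min_def)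

lemma creindex_codegen_chain_of:
  assumes "length Ss = Suc n" "j \<le> n" "k = Suc n"
  shows "creindex k (codegen n j) (chain_of Ss) = chain_of (take (Suc j) Ss @ drop j Ss)"
  unfolding assms(3)
proof
  fix i
  have "j + (i - Suc j) = i - 1" if "\<not> i \<le> j" using that by arith
  then show "creindex (Suc n) (codegen n j) (chain_of Ss) i = chain_of (take (Suc j) Ss @ drop j Ss) i"
    using assms by (cases "i \<le> j") (auto simp: creindex_def codegen_def chain_of_def nth_append min_def)
qed

lemma chains_2_middle_unique:
  assumes d: "d \<in> chains 2 k" and i: "i \<le> k" "d 0 \<subset> d i" "d i \<subset> {0..2}"
    and j: "j \<le> k" "d 0 \<subset> d j" "d j \<subset> {0..2}"
  shows "d i = d j"
proof -
  have card_mid: "card (d l) = 2" if "d 0 \<subset> d l" "d l \<subset> {0..2}" for l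
  proof -
    have "finite (d l)" using that(2) finite_subset by auto
    then have "card (d 0) < card (d l)" "card (d l) < card {0..2::nat}"
      using psubset_card_mono[of "d l" "d 0"] psubset_card_mono[of "{0..2}" "d l"] that by simp_all
    moreover have "card (d 0) \<noteq> 0"
      using chainsD(1,2)[OF d, of 0] finite_subset[of "d 0" "{0..2}"] by auto
    ultimately show ?thesis by simp
  qed
  have "d i \<subseteq> d j \<or> d j \<subseteq> d i"
    using chainsD(3)[OF d _ i(1)] chainsD(3)[OF d _ j(1)] by (cases "i \<le> j") auto
  moreover have "finite (d i)" "finite (d j)" using i(3) j(3) finite_subset by auto
  ultimately show ?thesis using card_mid[OF i(2,3)] card_mid[OF j(2,3)] by (metis card_subset_eq)
qed

text \<open>A chain of subsets of [2] takes at most one value strictly between its first member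
  and [2], so it is a reindexing of a chain with three members.\<close>
lemma chains_2_factor:
  assumes d: "d \<in> chains 2 k"
  obtains \<beta> M where "\<beta> \<in> opmap k 2" "d 0 \<subseteq> M" "M \<subseteq> {0..2}"
    "d = creindex k \<beta> (chain_of [d 0, M, {0..2}])"
proof -
  let ?A = "d 0" and ?U = "{0..2::nat}"
  define P where "P i \<longleftrightarrow> i \<le> k \<and> d i \<noteq> ?A \<and> d i \<noteq> ?U" for i
  define M where "M = (if \<exists>i. P i then d (SOME i. P i) else ?A)"
  define \<beta> :: "nat \<Rightarrow> nat" where "\<beta> i = (if i \<le> k then (if d i = ?U then 2 else if d i = ?A then 0 else 1) else 0)" for i
  have bounds: "?A \<subseteq> d i" "d i \<subseteq> ?U" if "i \<le> k" for i
    using chainsD(2,3)[OF d] that by auto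
  have M: "M = d i" if "P i" for i
  proof -
    have "P (SOME i. P i)" using that by (rule someI)
    then show ?thesis
      using that chains_2_middle_unique[OF d] bounds by (auto simp: M_def P_def psubset_eq)
  qed
  have "?A \<subseteq> M \<and> M \<subseteq> ?U"
  proof (cases "\<exists>i. P i")
    case True
    then obtain i where "P i" by blast
    then show ?thesis using M bounds by (simp add: P_def)
  next
    case False
    then show ?thesis using bounds[of 0] by (simp add: M_def)
  qed
  moreover have "\<beta> \<in> opmap k 2"
  proof (rule opmapI)
    fix i j assume ij: "i \<le> j" "j \<le> k"
    have "d i \<subseteq> d j" using chainsD(3)[OF d ij] .
    then show "\<beta> i \<le> \<beta> j" using ij bounds[of i] bounds[of j] by (auto simp: \<beta>_def)
  qed (auto simp: \<beta>_def)
  moreover have "d = creindex k \<beta> (chain_of [?A, M, ?U])"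
  proof
    fix i
    show "d i = creindex k \<beta> (chain_of [?A, M, ?U]) i"
      using M[of i] chainsD(4)[OF d, of i]
      by (auto simp: creindex_def chain_of_def \<beta>_def P_def)
  qed
  ultimately show ?thesis using that by blast
qed

section \<open>Simplicial sets, quotients and desingularization\<close>

lemma sobj_Delta: "sobj (Delta n) k = opmap k n"
  by (simp add: Delta_def)

lemma smap_Delta: "smap (Delta n) k m \<alpha> f = ocomp m f \<alpha>"
  by (simp add: Delta_def)

lemma sset_smap_closed:
  "is_sset Y \<Longrightarrow> \<alpha> \<in> opmap m n \<Longrightarrow> x \<in> sobj Y n \<Longrightarrow> smap Y n m \<alpha> x \<in> sobj Y m"
  by (simp add: is_sset_def)

lemma sset_smap_smap:
  "is_sset Y \<Longrightarrow> \<alpha> \<in> opmap m n \<Longrightarrow> \<beta> \<in> opmap k m \<Longrightarrow> x \<in> sobj Y n \<Longrightarrow>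
    smap Y m k \<beta> (smap Y n m \<alpha> x) = smap Y n k (ocomp k \<alpha> \<beta>) x"
  by (simp add: is_sset_def)

definition is_smap :: "'a sset \<Rightarrow> 'b sset \<Rightarrow> (nat \<Rightarrow> 'a \<Rightarrow> 'b) \<Rightarrow> bool" where
  "is_smap Y Z \<Phi> \<longleftrightarrow> (\<forall>n y. y \<in> sobj Y n \<longrightarrow> \<Phi> n y \<in> sobj Z n)
     \<and> (\<forall>n m \<alpha> y. \<alpha> \<in> opmap m n \<longrightarrow> y \<in> sobj Y n \<longrightarrow> \<Phi> m (smap Y n m \<alpha> y) = smap Z n m \<alpha> (\<Phi> n y))"

lemma is_smapD:
  "is_smap Y Z \<Phi> \<Longrightarrow> y \<in> sobj Y n \<Longrightarrow> \<Phi> n y \<in> sobj Z n"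
  "is_smap Y Z \<Phi> \<Longrightarrow> \<alpha> \<in> opmap m n \<Longrightarrow> y \<in> sobj Y n \<Longrightarrow> \<Phi> m (smap Y n m \<alpha> y) = smap Z n m \<alpha> (\<Phi> n y)"
  by (auto simp: is_smap_def)

lemma is_smap_Delta_smap:
  "is_smap Y (Delta m) \<Phi> \<Longrightarrow> \<alpha> \<in> opmap l n \<Longrightarrow> y \<in> sobj Y n \<Longrightarrow>
    \<Phi> l (smap Y n l \<alpha> y) = ocomp l (\<Phi> n y) \<alpha>"
  by (simp add: is_smapD(2) smap_Delta)

lemma compat_eqrel_equiv: "compat_eqrel Y R \<Longrightarrow> equiv (sobj Y n) (R n)"
  by (simp add: compat_eqrel_def)

lemma compat_eqrel_refl: "compat_eqrel Y R \<Longrightarrow> x \<in> sobj Y n \<Longrightarrow> (x, x) \<in> R n"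
  using compat_eqrel_equiv equiv_def refl_onD by metis

lemma compat_eqrel_sym: "compat_eqrel Y R \<Longrightarrow> (x, y) \<in> R n \<Longrightarrow> (y, x) \<in> R n"
  using compat_eqrel_equiv equiv_def symD by metis

lemma compat_eqrel_trans: "compat_eqrel Y R \<Longrightarrow> (x, y) \<in> R n \<Longrightarrow> (y, z) \<in> R n \<Longrightarrow> (x, z) \<in> R n"
  using compat_eqrel_equiv equiv_def transD by metis

lemma compat_eqrel_smap:
  "compat_eqrel Y R \<Longrightarrow> \<alpha> \<in> opmap m n \<Longrightarrow> (x, y) \<in> R n \<Longrightarrow> (smap Y n m \<alpha> x, smap Y n m \<alpha> y) \<in> R m"
  by (simp add: compat_eqrel_def)

lemma sobj_squot: "sobj (squot Y R) n = sobj Y n // R n"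
  by (simp add: squot_def)

lemma smap_squot_class:
  assumes "compat_eqrel Y R" "y \<in> sobj Y n" "\<alpha> \<in> opmap m n"
  shows "smap (squot Y R) n m \<alpha> (R n `` {y}) = R m `` {smap Y n m \<alpha> y}"
proof -
  let ?x = "SOME x. x \<in> R n `` {y}"
  have "y \<in> R n `` {y}" using compat_eqrel_refl[OF assms(1,2)] by simp
  then have "?x \<in> R n `` {y}" by (rule someI)
  then have "(y, ?x) \<in> R n" by simp
  then have "(smap Y n m \<alpha> ?x, smap Y n m \<alpha> y) \<in> R m"
    by (rule compat_eqrel_sym[OF assms(1) compat_eqrel_smap[OF assms(1,3)]])
  then have "R m `` {smap Y n m \<alpha> ?x} = R m `` {smap Y n m \<alpha> y}"
    by (rule equiv_class_eq[OF compat_eqrel_equiv[OF assms(1)]])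
  then show ?thesis by (simp add: squot_def)
qed

lemma squot_degenerate_class:
  assumes Y: "is_sset Y" and R: "compat_eqrel Y R" and t: "t \<in> sobj Y (Suc n)"
    and deg: "degenerate (squot Y R) (Suc n) (R (Suc n) `` {t})"
  shows "\<exists>i\<le>n. (t, smap Y n (Suc n) (codegen n i) (smap Y (Suc n) n (coface n (Suc i)) t)) \<in> R (Suc n)"
proof -
  obtain m \<alpha> W where m: "m < Suc n" "\<alpha> \<in> opmap (Suc n) m" "W \<in> sobj Y m // R m"
    and tW: "R (Suc n) `` {t} = smap (squot Y R) m (Suc n) \<alpha> W"
    using deg by (auto simp: degenerate_def sobj_squot)
  obtain w where w: "w \<in> sobj Y m" "W = R m `` {w}" using m(3) by (rule quotientE)
  let ?u = "smap Y m (Suc n) \<alpha> w"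
  have "R (Suc n) `` {t} = R (Suc n) `` {?u}"
    using tW w smap_squot_class[OF R w(1) m(2)] by simp
  then have tu: "(t, ?u) \<in> R (Suc n)"
    using eq_equiv_class_iff[OF compat_eqrel_equiv[OF R] t sset_smap_closed[OF Y m(2) w(1)]] by simp
  obtain i where i: "i \<le> n" "\<alpha> i = \<alpha> (Suc i)"
    using opmap_adjacent_eq[OF m(2)] m(1) by auto
  let ?\<delta> = "coface n (Suc i)" and ?\<sigma> = "codegen n i"
  have \<sigma>: "?\<sigma> \<in> opmap (Suc n) n" using codegen_opmap[OF i(1)] .
  have "smap Y n (Suc n) ?\<sigma> (smap Y (Suc n) n ?\<delta> ?u) = ?u"
    using sset_smap_smap[OF Y m(2) coface_opmap w(1)]
      sset_smap_smap[OF Y ocomp_opmap[OF m(2) coface_opmap] \<sigma> w(1)]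
      ocomp_coface_codegen[OF m(2) i] by simp
  moreover have "(smap Y n (Suc n) ?\<sigma> (smap Y (Suc n) n ?\<delta> t), smap Y n (Suc n) ?\<sigma> (smap Y (Suc n) n ?\<delta> ?u))
      \<in> R (Suc n)"
    by (rule compat_eqrel_smap[OF R \<sigma> compat_eqrel_smap[OF R coface_opmap tu]])
  ultimately show ?thesis
    using i(1) compat_eqrel_trans[OF R tu compat_eqrel_sym[OF R]] by auto
qed

lemma nonsingular_squot_triangle:
  assumes Y: "is_sset Y" and R: "compat_eqrel Y R" and ns: "nonsingular (squot Y R)"
    and t: "t \<in> sobj Y 2" and v: "(smap Y 2 0 (vertex 0) t, smap Y 2 0 (vertex 1) t) \<in> R 0"
  shows "\<exists>i\<le>1. (t, smap Y 1 2 (codegen 1 i) (smap Y 2 1 (coface 1 (Suc i)) t)) \<in> R 2"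
proof -
  let ?T = "R 2 `` {t}"
  have T: "?T \<in> sobj (squot Y R) 2" using t by (simp add: sobj_squot quotientI)
  have "smap (squot Y R) 2 0 (vertex 0) ?T = smap (squot Y R) 2 0 (vertex 1) ?T"
    using smap_squot_class[OF R t] vertex_opmap equiv_class_eq[OF compat_eqrel_equiv[OF R] v]
    by simp
  moreover have "vertex 0 \<noteq> vertex 1" by (auto simp: vertex_def fun_eq_iff)
  ultimately have "\<not> inj_on (\<lambda>f. smap (squot Y R) 2 0 f ?T) (opmap 0 2)"
    using vertex_opmap[of 0 2] vertex_opmap[of 1 2] by (auto simp: inj_on_def)
  then have "degenerate (squot Y R) 2 ?T" using ns T by (auto simp: nonsingular_def)
  then show ?thesis
    using squot_degenerate_class[OF Y R, of t 1] t by (simp add: numeral_2_eq_2)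
qed

definition sker :: "'a sset \<Rightarrow> (nat \<Rightarrow> 'a \<Rightarrow> 'b) \<Rightarrow> nat \<Rightarrow> ('a \<times> 'a) set" where
  "sker Y \<Phi> n = {(y, y'). y \<in> sobj Y n \<and> y' \<in> sobj Y n \<and> \<Phi> n y = \<Phi> n y'}"

lemma sker_class: "y \<in> sobj Y n \<Longrightarrow> sker Y \<Phi> n `` {y} = {y' \<in> sobj Y n. \<Phi> n y' = \<Phi> n y}"
  by (auto simp: sker_def)

lemma compat_eqrel_sker: "is_sset Y \<Longrightarrow> is_smap Y Z \<Phi> \<Longrightarrow> compat_eqrel Y (sker Y \<Phi>)"
  unfolding compat_eqrel_def
  by (auto simp: sker_def equiv_def refl_on_def sym_def trans_def sset_smap_closed is_smapD(2))

lemma squot_sker_degenerate: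
  assumes Y: "is_sset Y" and \<Phi>: "is_smap Y (Delta m) \<Phi>"
    and surj: "\<And>n. opmap n m \<subseteq> \<Phi> n ` sobj Y n"
    and y: "y \<in> sobj Y n" and ij: "i < j" "j \<le> n" and eq: "\<Phi> n y i = \<Phi> n y j"
  shows "degenerate (squot Y (sker Y \<Phi>)) n (sker Y \<Phi> n `` {y})"
proof -
  let ?K = "sker Y \<Phi>"
  define g where "g = \<Phi> n y"
  have g: "g \<in> opmap n m" using is_smapD(1)[OF \<Phi> y] by (simp add: g_def sobj_Delta)
  then have gi: "g i = g (Suc i)"
    using opmapD(2)[OF g, of i "Suc i"] opmapD(2)[OF g, of "Suc i" j] ij eq by (simp add: g_def)
  obtain n' where n: "n = Suc n'" using ij by (cases n) auto
  have i: "i \<le> n'" using ij n by simp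
  let ?\<sigma> = "codegen n' i"
  have \<sigma>: "?\<sigma> \<in> opmap n n'" using codegen_opmap[OF i] n by simp
  have "ocomp n' g (coface n' (Suc i)) \<in> \<Phi> n' ` sobj Y n'"
    using surj ocomp_opmap[OF g[unfolded n] coface_opmap] by (rule subsetD)
  then obtain y' where y': "y' \<in> sobj Y n'" "\<Phi> n' y' = ocomp n' g (coface n' (Suc i))"
    by (metis imageE)
  have "\<Phi> n (smap Y n' n ?\<sigma> y') = g"
    using is_smap_Delta_smap[OF \<Phi> \<sigma> y'(1)] y'(2) ocomp_coface_codegen[OF g[unfolded n] i gi] n
    by simp
  then have "smap (squot Y ?K) n' n ?\<sigma> (?K n' `` {y'}) = ?K n `` {y}"
    using smap_squot_class[OF compat_eqrel_sker[OF Y \<Phi>] y'(1) \<sigma>] sker_class[where \<Phi>=\<Phi>, OF y]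
      sker_class[where \<Phi>=\<Phi>, OF sset_smap_closed[OF Y \<sigma> y'(1)]] by (simp add: g_def)
  moreover have "?K n' `` {y'} \<in> sobj (squot Y ?K) n'" using y'(1) by (simp add: sobj_squot quotientI)
  ultimately show ?thesis
    unfolding degenerate_def using \<sigma> n by blast
qed

lemma nonsingular_squot_sker:
  assumes Y: "is_sset Y" and \<Phi>: "is_smap Y (Delta m) \<Phi>"
    and surj: "\<And>n. opmap n m \<subseteq> \<Phi> n ` sobj Y n"
  shows "nonsingular (squot Y (sker Y \<Phi>))"
  unfolding nonsingular_def
proof (intro allI impI)
  let ?K = "sker Y \<Phi>" and ?Q = "squot Y (sker Y \<Phi>)"
  have K: "compat_eqrel Y ?K" by (rule compat_eqrel_sker[OF Y \<Phi>])
  fix n C k assume C: "C \<in> sobj ?Q n" and nd: "\<not> degenerate ?Q n C"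
  obtain y where y: "y \<in> sobj Y n" "C = ?K n `` {y}" using C by (auto simp: sobj_squot elim: quotientE)
  let ?g = "\<Phi> n y"
  have g_inj: "?g i \<noteq> ?g j" if "i < j" "j \<le> n" for i j
    using squot_sker_degenerate[OF Y \<Phi> surj y(1) that] nd y(2) by blast
  show "inj_on (\<lambda>f. smap ?Q n k f C) (opmap k n)"
  proof (rule inj_onI)
    fix f f' assume f: "f \<in> opmap k n" and f': "f' \<in> opmap k n"
      and "smap ?Q n k f C = smap ?Q n k f' C"
    then have "?K k `` {smap Y n k f y} = ?K k `` {smap Y n k f' y}"
      using smap_squot_class[OF K y(1) f] smap_squot_class[OF K y(1) f'] y(2) by simp
    then have "(smap Y n k f y, smap Y n k f' y) \<in> ?K k"
      using eq_equiv_class_iff[OF compat_eqrel_equiv[OF K]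
          sset_smap_closed[OF Y f y(1)] sset_smap_closed[OF Y f' y(1)]] by simp
    then have "ocomp k ?g f = ocomp k ?g f'"
      using is_smap_Delta_smap[OF \<Phi> f y(1)] is_smap_Delta_smap[OF \<Phi> f' y(1)] by (simp add: sker_def)
    then show "f = f'" using inj_onD[OF inj_on_ocomp[OF g_inj] _ f f'] by simp
  qed
qed

context
  fixes Y :: "'a sset" and Z :: "'b sset" and \<Phi> :: "nat \<Rightarrow> 'a \<Rightarrow> 'b"
  assumes Y: "is_sset Y" and \<Phi>: "is_smap Y Z \<Phi>"
    and sker_nonsingular: "nonsingular (squot Y (sker Y \<Phi>))"
    and sker_least: "\<And>R. compat_eqrel Y R \<Longrightarrow> nonsingular (squot Y R) \<Longrightarrow> sker Y \<Phi> \<le> R"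
begin

lemma dsing_vec_eq_iff:
  assumes y: "y \<in> sobj Y n" and y': "y' \<in> sobj Y n"
  shows "dsing_vec Y n y = dsing_vec Y n y' \<longleftrightarrow> \<Phi> n y = \<Phi> n y'"
proof
  assume "dsing_vec Y n y = dsing_vec Y n y'"
  then have "dsing_vec Y n y (sker Y \<Phi>) = dsing_vec Y n y' (sker Y \<Phi>)" by simp
  then have "sker Y \<Phi> n `` {y} = sker Y \<Phi> n `` {y'}"
    using compat_eqrel_sker[OF Y \<Phi>] sker_nonsingular by (simp add: dsing_vec_def)
  then show "\<Phi> n y = \<Phi> n y'" using y y' by (auto simp: sker_def)
next
  assume "\<Phi> n y = \<Phi> n y'"
  then have "(y, y') \<in> sker Y \<Phi> n" using y y' by (simp add: sker_def)
  then have "R n `` {y} = R n `` {y'}" if "compat_eqrel Y R" "nonsingular (squot Y R)" for R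
    using le_funD[OF sker_least[OF that]] equiv_class_eq[OF compat_eqrel_equiv[OF that(1)]] by blast
  then show "dsing_vec Y n y = dsing_vec Y n y'" by (simp add: dsing_vec_def fun_eq_iff)
qed

lemma Dsing_some_rep:
  assumes "t \<in> sobj (Dsing Y) n"
  defines "y \<equiv> SOME y. y \<in> sobj Y n \<and> dsing_vec Y n y = t"
  shows "y \<in> sobj Y n" "dsing_vec Y n y = t"
proof -
  have "\<exists>y. y \<in> sobj Y n \<and> dsing_vec Y n y = t" using assms(1) by (auto simp: Dsing_def)
  then show "y \<in> sobj Y n" "dsing_vec Y n y = t" unfolding y_def by (metis (mono_tags, lifting) someI_ex)+
qed

lemma Dsing_iso:
  assumes surj: "\<And>n. \<Phi> n ` sobj Y n = sobj Z n"
  shows "sset_iso (Dsing Y) Z (\<lambda>n t. \<Phi> n (SOME y. y \<in> sobj Y n \<and> dsing_vec Y n y = t))"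
proof -
  define F where "F = (\<lambda>n t. \<Phi> n (SOME y. y \<in> sobj Y n \<and> dsing_vec Y n y = t))"
  have sobj_D: "sobj (Dsing Y) n = dsing_vec Y n ` sobj Y n" for n
    by (simp add: Dsing_def)
  have F: "F n (dsing_vec Y n y) = \<Phi> n y" if y: "y \<in> sobj Y n" for n y
    using Dsing_some_rep[of "dsing_vec Y n y" n] dsing_vec_eq_iff[OF _ y] y by (simp add: sobj_D F_def)
  have "bij_betw (F n) (sobj (Dsing Y) n) (sobj Z n)" for n
  proof (rule bij_betw_imageI)
    show "inj_on (F n) (sobj (Dsing Y) n)"
      by (rule inj_onI) (auto simp: sobj_D F dsing_vec_eq_iff)
    show "F n ` sobj (Dsing Y) n = sobj Z n"
      using surj[of n] by (auto simp: sobj_D F image_image)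
  qed
  moreover have "F m (smap (Dsing Y) n m \<alpha> t) = smap Z n m \<alpha> (F n t)"
    if \<alpha>: "\<alpha> \<in> opmap m n" and t: "t \<in> sobj (Dsing Y) n" for n m \<alpha> t
  proof -
    let ?y = "SOME y. y \<in> sobj Y n \<and> dsing_vec Y n y = t"
    have y: "?y \<in> sobj Y n" using Dsing_some_rep[OF t] by simp
    have "F m (smap (Dsing Y) n m \<alpha> t) = \<Phi> m (smap Y n m \<alpha> ?y)"
      using F[OF sset_smap_closed[OF Y \<alpha> y]] by (simp add: Dsing_def)
    also have "\<dots> = smap Z n m \<alpha> (F n t)"
      using is_smapD(2)[OF \<Phi> \<alpha> y] by (simp add: F_def)
    finally show ?thesis .
  qed
  ultimately show ?thesis unfolding F_def[symmetric] sset_iso_def by blast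
qed

end

section \<open>Subdivision\<close>

definition sd_class :: "'a sset \<Rightarrow> nat \<Rightarrow> nat \<times> 'a \<times> (nat \<Rightarrow> nat set) \<Rightarrow> (nat \<times> 'a \<times> (nat \<Rightarrow> nat set)) set" where
  "sd_class X k p = sd_rel X k `` {p}"

definition sd_reindex :: "nat \<Rightarrow> (nat \<Rightarrow> nat) \<Rightarrow> nat \<times> 'a \<times> (nat \<Rightarrow> nat set) \<Rightarrow> nat \<times> 'a \<times> (nat \<Rightarrow> nat set)" where
  "sd_reindex k' \<beta> = (\<lambda>(n, x, c). (n, x, creindex k' \<beta> c))"

lemma sd_rel_refl: "(p, p) \<in> sd_rel X k"
  by (simp add: sd_rel_def)

lemma sd_rel_sym: "(p, q) \<in> sd_rel X k \<Longrightarrow> (q, p) \<in> sd_rel X k"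
  unfolding sd_rel_def by (metis sym_Un_converse sym_rtrancl symD)

lemma sd_rel_trans: "(p, q) \<in> sd_rel X k \<Longrightarrow> (q, r) \<in> sd_rel X k \<Longrightarrow> (p, r) \<in> sd_rel X k"
  unfolding sd_rel_def by (rule rtrancl_trans)

lemma sd_relI:
  "\<alpha> \<in> opmap n n' \<Longrightarrow> x \<in> sobj X n' \<Longrightarrow> c \<in> chains n k \<Longrightarrow>
    ((n', x, cpush \<alpha> k c), (n, smap X n' n \<alpha> x, c)) \<in> sd_rel X k"
  unfolding sd_rel_def sd_gen_def by blast

lemma sd_rel_invariant:
  assumes "\<And>p q. (p, q) \<in> sd_gen X k \<Longrightarrow> \<phi> p = \<phi> q" and "(p, q) \<in> sd_rel X k"
  shows "\<phi> p = \<phi> q"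
  using assms(2) unfolding sd_rel_def
  by (induction rule: rtrancl_induct) (auto dest: assms(1))

lemma sd_class_eq_iff: "sd_class X k p = sd_class X k q \<longleftrightarrow> (p, q) \<in> sd_rel X k"
  unfolding sd_class_def
  by (metis Image_singleton_iff sd_rel_refl sd_rel_sym sd_rel_trans subsetI subset_antisym)

lemma sd_rel_reindex:
  assumes "(p, q) \<in> sd_rel X k" "\<beta> \<in> opmap k' k"
  shows "(sd_reindex k' \<beta> p, sd_reindex k' \<beta> q) \<in> sd_rel X k'"
  using assms(1) unfolding sd_rel_def
proof (induction rule: rtrancl_induct)
  case (step q r)
  have "(sd_reindex k' \<beta> u, sd_reindex k' \<beta> v) \<in> sd_gen X k'" if "(u, v) \<in> sd_gen X k" for u v
    using that assms(2) unfolding sd_gen_def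
    by (force simp: sd_reindex_def creindex_cpush intro: creindex_chains)
  then have "(sd_reindex k' \<beta> q, sd_reindex k' \<beta> r) \<in> sd_gen X k' \<union> (sd_gen X k')\<inverse>"
    using step.hyps(2) by blast
  with step.IH show ?case by (rule rtrancl_into_rtrancl)
qed simp

lemma sd_reindex_dom: "p \<in> sd_dom X k \<Longrightarrow> \<beta> \<in> opmap k' k \<Longrightarrow> sd_reindex k' \<beta> p \<in> sd_dom X k'"
  by (auto simp: sd_dom_def sd_reindex_def creindex_chains)

lemma sobj_Sd: "sobj (Sd X) k = sd_class X k ` sd_dom X k"
  by (auto simp: Sd_def sd_class_def)

lemma sd_class_some_rel:
  assumes "p \<in> sd_dom X k"
  shows "(p, SOME q. q \<in> sd_class X k p \<inter> sd_dom X k) \<in> sd_rel X k"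
proof -
  have "p \<in> sd_class X k p \<inter> sd_dom X k" using assms by (simp add: sd_class_def sd_rel_refl)
  then have "(SOME q. q \<in> sd_class X k p \<inter> sd_dom X k) \<in> sd_class X k p" by (metis IntD1 someI)
  then show ?thesis by (simp add: sd_class_def)
qed

lemma smap_Sd_class:
  assumes "p \<in> sd_dom X k" "\<beta> \<in> opmap k' k"
  shows "smap (Sd X) k k' \<beta> (sd_class X k p) = sd_class X k' (sd_reindex k' \<beta> p)"
proof -
  let ?q = "SOME q. q \<in> sd_class X k p \<inter> sd_dom X k"
  have "(sd_reindex k' \<beta> p, sd_reindex k' \<beta> ?q) \<in> sd_rel X k'"
    using sd_rel_reindex[OF sd_class_some_rel[OF assms(1)] assms(2)] .
  then have "sd_class X k' (sd_reindex k' \<beta> ?q) = sd_class X k' (sd_reindex k' \<beta> p)"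
    by (simp add: sd_class_eq_iff sd_rel_sym)
  then show ?thesis
    by (simp add: Sd_def sd_class_def[symmetric] sd_reindex_def case_prod_unfold)
qed

lemma is_sset_Sd: "is_sset (Sd X)"
  unfolding is_sset_def
proof (intro conjI allI impI)
  fix n m \<alpha> y assume "\<alpha> \<in> opmap m n" "y \<in> sobj (Sd X) n"
  then show "smap (Sd X) n m \<alpha> y \<in> sobj (Sd X) m"
    by (auto simp: sobj_Sd smap_Sd_class sd_reindex_dom)
next
  fix n y assume "y \<in> sobj (Sd X) n"
  then show "smap (Sd X) n n (idop n) y = y"
    by (auto simp: sobj_Sd smap_Sd_class idop_opmap sd_reindex_def sd_dom_def creindex_idop)
next
  fix n m k \<alpha> \<beta> y assume "\<alpha> \<in> opmap m n" "\<beta> \<in> opmap k m" "y \<in> sobj (Sd X) n"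
  then show "smap (Sd X) m k \<beta> (smap (Sd X) n m \<alpha> y) = smap (Sd X) n k (ocomp k \<alpha> \<beta>) y"
    by (auto simp: sobj_Sd smap_Sd_class sd_reindex_dom ocomp_opmap)
      (auto simp: sd_reindex_def creindex_creindex)
qed

section \<open>The subdivision of Delta[2]/boundary\<close>

abbreviation S2 :: "(nat \<Rightarrow> nat) option sset" where
  "S2 \<equiv> collapse (Delta 2) (bdry 2)"

lemma sobj_S2: "sobj S2 n = Some ` (opmap n 2 - bdry 2 n) \<union> {None}"
  by (simp add: collapse_def Delta_def)

lemma smap_S2:
  "smap S2 n m \<alpha> None = None"
  "smap S2 n m \<alpha> (Some f) = (if ocomp m f \<alpha> \<in> bdry 2 m then None else Some (ocomp m f \<alpha>))"
  by (simp_all add: collapse_def Delta_def Let_def)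

lemma Some_idop_sobj_S2: "Some (idop 2) \<in> sobj S2 2"
  by (simp add: sobj_S2 bdry_def idop_opmap idop_image)

definition point_chain :: "nat \<Rightarrow> nat \<Rightarrow> nat set" where
  "point_chain k = (\<lambda>i. if i \<le> k then {0} else {})"

lemma point_chain_chains: "point_chain k \<in> chains n k"
  by (rule chainsI) (auto simp: point_chain_def)

lemma cpush_zero: "c \<in> chains n k \<Longrightarrow> cpush (\<lambda>i. 0) k c = point_chain k"
  by (auto simp: cpush_def point_chain_def fun_eq_iff dest: chainsD(1))

definition basepoint :: "nat \<Rightarrow> (nat \<times> (nat \<Rightarrow> nat) option \<times> (nat \<Rightarrow> nat set)) set" where
  "basepoint k = sd_class S2 k (0, None, point_chain k)"

definition chain_simplex :: "nat \<Rightarrow> (nat \<Rightarrow> nat set) \<Rightarrow> (nat \<times> (nat \<Rightarrow> nat) option \<times> (nat \<Rightarrow> nat set)) set" where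
  "chain_simplex k d = sd_class S2 k (2, Some (idop 2), d)"

lemma sd_rel_S2_None:
  assumes "c \<in> chains n k"
  shows "((0, None, point_chain k), (n, None, c)) \<in> sd_rel S2 k"
proof -
  have "(\<lambda>i. 0) \<in> opmap n 0" by (rule opmapI) auto
  from sd_relI[OF this _ assms, where X=S2 and x=None] show ?thesis
    by (simp add: sobj_S2 smap_S2 cpush_zero[OF assms])
qed

lemma sd_rel_S2_Some:
  assumes "f \<in> opmap n 2" "f \<notin> bdry 2 n" "c \<in> chains n k"
  shows "((2, Some (idop 2), cpush f k c), (n, Some f, c)) \<in> sd_rel S2 k"
  using sd_relI[OF assms(1) Some_idop_sobj_S2 assms(3)] assms(2)
  by (simp add: smap_S2 ocomp_idop[OF assms(1)])

text \<open>A chain avoiding the vertex e is fixed by a self-map of [2] whose image misses e,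
  and that map collapses the top simplex of S2 to the basepoint.\<close>
lemma chain_simplex_nonfull:
  assumes d: "d \<in> chains 2 k" and top: "d k \<noteq> {0..2}"
  shows "chain_simplex k d = basepoint k"
proof -
  have dk: "d k \<subseteq> {0..2}" using chainsD(2)[OF d order_refl] .
  then obtain e where e: "e \<le> 2" "e \<notin> d k" using top by fastforce
  define \<rho> where "\<rho> = ocomp 2 (coface 1 e) (codegen 1 (e - 1))"
  have \<sigma>: "codegen 1 (e - 1) \<in> opmap 2 1" by (rule codegen_1_opmap) (use e(1) in simp)
  then have \<rho>: "\<rho> \<in> opmap 2 2" unfolding \<rho>_def by (rule ocomp_opmap[OF coface_1_opmap])
  have \<rho>_fix: "\<rho> x = x" if "x \<in> d k" for x
    using coface_codegen_fix[of x 1 e] that dk e by (force simp: \<rho>_def numeral_2_eq_2)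
  have "cpush \<rho> k d = d"
  proof
    fix i
    show "cpush \<rho> k d i = d i"
    proof (cases "i \<le> k")
      case True
      then have "\<forall>x\<in>d i. \<rho> x = x" using chainsD(3)[OF d True order_refl] \<rho>_fix by blast
      then show ?thesis using True by (simp add: cpush_def)
    next
      case False
      then show ?thesis using chainsD(4)[OF d] by (simp add: cpush_def)
    qed
  qed
  moreover have "e \<notin> \<rho> ` {0..2}"
  proof
    assume "e \<in> \<rho> ` {0..2}"
    then obtain x where "x \<le> 2" "e = coface 1 e (codegen 1 (e - 1) x)"
      by (auto simp: \<rho>_def ocomp_def)
    moreover have "codegen 1 (e - 1) x \<le> 1"
      using opmapD(1)[OF \<sigma> \<open>x \<le> 2\<close>] .
    ultimately show False using coface_neq by metis
  qed
  then have "\<rho> \<in> bdry 2 2" using \<rho> e(1) by (auto simp: bdry_def)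
  ultimately have "((2, Some (idop 2), d), (2, None, d)) \<in> sd_rel S2 k"
    using sd_relI[OF \<rho> Some_idop_sobj_S2 d] by (simp add: smap_S2 ocomp_idop[OF \<rho>])
  then show ?thesis
    using sd_rel_trans[OF _ sd_rel_sym[OF sd_rel_S2_None[OF d]]]
    by (simp add: chain_simplex_def basepoint_def sd_class_eq_iff)
qed

lemma chain_simplex_eq_nonfull:
  "d \<in> chains 2 k \<Longrightarrow> d k \<noteq> {0..2} \<Longrightarrow> d' \<in> chains 2 k \<Longrightarrow> d' k \<noteq> {0..2} \<Longrightarrow>
    chain_simplex k d = chain_simplex k d'"
  by (simp add: chain_simplex_nonfull)

lemma zero_ne_full: "{0::nat} \<noteq> {0..2}"
proof -
  have "(2::nat) \<notin> {0}" by simp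
  then show ?thesis by (metis atLeastAtMost_iff le_refl zero_le)
qed

lemma sobj_Sd_S2: "sobj (Sd S2) k = chain_simplex k ` chains 2 k"
proof
  have "(2, Some (idop 2), d) \<in> sd_dom S2 k" if "d \<in> chains 2 k" for d
    using that Some_idop_sobj_S2 by (simp add: sd_dom_def)
  then show "chain_simplex k ` chains 2 k \<subseteq> sobj (Sd S2) k"
    unfolding sobj_Sd chain_simplex_def by blast
next
  show "sobj (Sd S2) k \<subseteq> chain_simplex k ` chains 2 k"
  proof
    fix y assume "y \<in> sobj (Sd S2) k"
    then obtain p where p: "p \<in> sd_dom S2 k" "y = sd_class S2 k p" by (auto simp only: sobj_Sd)
    obtain n x c where "p = (n, x, c)" by (cases p)
    with p have y: "y = sd_class S2 k (n, x, c)" "x \<in> sobj S2 n" "c \<in> chains n k"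
      by (simp_all add: sd_dom_def)
    show "y \<in> chain_simplex k ` chains 2 k"
    proof (cases x)
      case None
      have "point_chain k k \<noteq> {0..2}" by (simp add: point_chain_def zero_ne_full)
      then have "chain_simplex k (point_chain k) = basepoint k"
        by (rule chain_simplex_nonfull[OF point_chain_chains])
      also have "\<dots> = y"
        using sd_rel_S2_None[OF y(3)] y(1) None by (simp add: basepoint_def sd_class_eq_iff)
      finally show ?thesis by (intro rev_image_eqI[OF point_chain_chains]) simp
    next
      case (Some f)
      then have f: "f \<in> opmap n 2" "f \<notin> bdry 2 n" using y(2) by (auto simp: sobj_S2)
      then have "chain_simplex k (cpush f k c) = y"
        using sd_rel_S2_Some[OF f y(3)] y(1) Some by (simp add: chain_simplex_def sd_class_eq_iff)
      then show ?thesis by (intro rev_image_eqI[OF cpush_chains[OF y(3) f(1)]]) simp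
    qed
  qed
qed

lemma smap_chain_simplex:
  "d \<in> chains 2 k \<Longrightarrow> \<beta> \<in> opmap k' k \<Longrightarrow>
    smap (Sd S2) k k' \<beta> (chain_simplex k d) = chain_simplex k' (creindex k' \<beta> d)"
  using Some_idop_sobj_S2
  by (simp add: chain_simplex_def smap_Sd_class sd_dom_def sd_reindex_def)

lemma triangle_vertices_eq:
  assumes "A \<noteq> {}" "A \<subseteq> B" "B \<subseteq> {0..2}" "B \<noteq> {0..2}"
  shows "smap (Sd S2) 2 0 (vertex 0) (chain_simplex 2 (chain_of [A, B, {0..2}])) =
    smap (Sd S2) 2 0 (vertex 1) (chain_simplex 2 (chain_of [A, B, {0..2}]))"
proof -
  have "A \<subseteq> {0..2}" "B \<noteq> {}" using assms by blast+
  then have ch: "chain_of [A, B, {0..2}] \<in> chains 2 2"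
    "chain_of [A] \<in> chains 2 0" "chain_of [B] \<in> chains 2 0"
    using assms by (intro chain_of_chains; simp)+
  have "A \<noteq> {0..2}" using assms by blast
  then have "chain_simplex 0 (chain_of [A]) = chain_simplex 0 (chain_of [B])"
    using chain_simplex_eq_nonfull[OF ch(2) _ ch(3)] assms(4) by (simp add: chain_of_def)
  moreover have "vertex 0 \<in> opmap 0 2" "vertex 1 \<in> opmap 0 2" by (simp_all add: vertex_opmap)
  ultimately show ?thesis
    using smap_chain_simplex[OF ch(1)] by (simp add: creindex_vertex_chain_of del: One_nat_def)
qed

definition chain_mark :: "nat \<Rightarrow> (nat \<Rightarrow> nat set) \<Rightarrow> nat \<Rightarrow> nat" where
  "chain_mark k d = (\<lambda>i. if i \<le> k \<and> d i = {0..2} then 1 else 0)"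

definition mark_chain :: "nat \<Rightarrow> (nat \<Rightarrow> nat) \<Rightarrow> nat \<Rightarrow> nat set" where
  "mark_chain k g = (\<lambda>i. if i \<le> k then (if g i = 1 then {0..2} else {0}) else {})"

lemma chain_mark_opmap:
  assumes "d \<in> chains 2 k"
  shows "chain_mark k d \<in> opmap k 1"
proof (rule opmapI)
  fix i j assume ij: "i \<le> j" "j \<le> k"
  have "d i = {0..2} \<Longrightarrow> d j = {0..2}"
    using chainsD(3)[OF assms ij] chainsD(2)[OF assms ij(2)] by blast
  then show "chain_mark k d i \<le> chain_mark k d j" using ij by (simp add: chain_mark_def)
qed (simp_all add: chain_mark_def)

lemma chain_mark_creindex:
  "\<beta> \<in> opmap k' k \<Longrightarrow> chain_mark k' (creindex k' \<beta> d) = ocomp k' (chain_mark k d) \<beta>"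
  by (auto simp: chain_mark_def creindex_def ocomp_def fun_eq_iff dest: opmapD(1))

lemma mark_chain_chains:
  assumes "g \<in> opmap k 1"
  shows "mark_chain k g \<in> chains 2 k"
proof (rule chainsI)
  fix i j assume ij: "i \<le> j" "j \<le> k"
  then show "mark_chain k g i \<subseteq> mark_chain k g j"
    using opmapD(1)[OF assms, of j] opmapD(2)[OF assms ij] by (auto simp: mark_chain_def)
qed (auto simp: mark_chain_def)

lemma mark_chain_ocomp:
  "\<beta> \<in> opmap k' k \<Longrightarrow> mark_chain k' (ocomp k' g \<beta>) = creindex k' \<beta> (mark_chain k g)"
  by (auto simp: mark_chain_def creindex_def ocomp_def fun_eq_iff dest: opmapD(1))

lemma chain_mark_mark_chain:
  assumes "g \<in> opmap k 1"
  shows "chain_mark k (mark_chain k g) = g"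
proof
  fix i
  have "g i = 0 \<or> g i = 1 \<or> k < i" using opmapD(1)[OF assms, of i] by linarith
  then show "chain_mark k (mark_chain k g) i = g i"
    using opmapD(3)[OF assms, of i] zero_ne_full by (auto simp: chain_mark_def mark_chain_def)
qed

lemma mark_chain_chain_mark_chain_of:
  "mark_chain 2 (chain_mark 2 (chain_of [A, M, {0..2}])) =
    chain_of [if A = {0..2} then {0..2} else {0}, if M = {0..2} then {0..2} else {0}, {0..2}]"
proof
  fix i :: nat
  consider "i = 0" | "i = 1" | "i = 2" | "2 < i" by linarith
  then show "mark_chain 2 (chain_mark 2 (chain_of [A, M, {0..2}])) i =
      chain_of [if A = {0..2} then {0..2} else {0}, if M = {0..2} then {0..2} else {0}, {0..2}] i"
    by cases (simp_all add: mark_chain_def chain_mark_def chain_of_def)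
qed

lemma chain_mark_cpush_bdry:
  assumes g: "g \<in> bdry 2 n" and c: "c \<in> chains n k"
  shows "chain_mark k (cpush g k c) = (\<lambda>i. 0)"
proof -
  have "g ` c i \<noteq> {0..2}" if "i \<le> k" for i
  proof
    assume full: "g ` c i = {0..2}"
    have "g ` c i \<subseteq> g ` {0..n}" using chainsD(2)[OF c that] by (rule image_mono)
    moreover have "g ` {0..n} \<subseteq> {0..2}" using g by (auto simp: bdry_def dest: opmapD(1))
    ultimately show False using full g by (auto simp: bdry_def)
  qed
  then show ?thesis by (auto simp: chain_mark_def cpush_def fun_eq_iff)
qed

text \<open>The i-th vertex of a simplex of Sd S2 is marked when it is the barycentre of the
  non-degenerate 2-simplex.\<close>
definition bary_mark :: "nat \<Rightarrow> nat \<times> (nat \<Rightarrow> nat) option \<times> (nat \<Rightarrow> nat set) \<Rightarrow> nat \<Rightarrow> nat" where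
  "bary_mark k = (\<lambda>(n, x, c). case x of None \<Rightarrow> (\<lambda>i. 0) | Some f \<Rightarrow> chain_mark k (cpush f k c))"

definition bary :: "nat \<Rightarrow> (nat \<times> (nat \<Rightarrow> nat) option \<times> (nat \<Rightarrow> nat set)) set \<Rightarrow> nat \<Rightarrow> nat" where
  "bary k y = bary_mark k (SOME p. p \<in> y \<inter> sd_dom S2 k)"

lemma bary_mark_sd_gen:
  assumes "(p, q) \<in> sd_gen S2 k"
  shows "bary_mark k p = bary_mark k q"
proof -
  obtain n n' \<alpha> x c where pq: "p = (n', x, cpush \<alpha> k c)" "q = (n, smap S2 n' n \<alpha> x, c)"
    and \<alpha>: "\<alpha> \<in> opmap n n'" and x: "x \<in> sobj S2 n'" and c: "c \<in> chains n k"
    using assms unfolding sd_gen_def by blast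
  show ?thesis
  proof (cases x)
    case (Some f)
    then show ?thesis
      using pq cpush_cpush[OF c] chain_mark_cpush_bdry[OF _ c]
      by (auto simp: bary_mark_def smap_S2)
  qed (simp add: pq bary_mark_def smap_S2)
qed

lemma bary_sd_class: "p \<in> sd_dom S2 k \<Longrightarrow> bary k (sd_class S2 k p) = bary_mark k p"
  unfolding bary_def
  by (rule sd_rel_invariant[OF bary_mark_sd_gen sd_rel_sym[OF sd_class_some_rel]])

lemma bary_chain_simplex: "d \<in> chains 2 k \<Longrightarrow> bary k (chain_simplex k d) = chain_mark k d"
  using Some_idop_sobj_S2
  by (simp add: chain_simplex_def bary_sd_class sd_dom_def bary_mark_def cpush_idop)

lemma is_smap_bary: "is_smap (Sd S2) (Delta 1) bary"
  unfolding is_smap_def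
proof (intro conjI allI impI)
  fix n y assume "y \<in> sobj (Sd S2) n"
  then obtain d where "d \<in> chains 2 n" "y = chain_simplex n d" by (auto simp: sobj_Sd_S2)
  then show "bary n y \<in> sobj (Delta 1) n"
    using chain_mark_opmap by (simp add: sobj_Delta bary_chain_simplex)
next
  fix n m \<alpha> y assume \<alpha>: "\<alpha> \<in> opmap m n" and "y \<in> sobj (Sd S2) n"
  then obtain d where "d \<in> chains 2 n" "y = chain_simplex n d" by (auto simp: sobj_Sd_S2)
  with \<alpha> show "bary m (smap (Sd S2) n m \<alpha> y) = smap (Delta 1) n m \<alpha> (bary n y)"
    by (simp add: smap_chain_simplex bary_chain_simplex creindex_chains chain_mark_creindex smap_Delta)
qed

lemma bary_surj: "bary k ` sobj (Sd S2) k = opmap k 1"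
proof
  show "bary k ` sobj (Sd S2) k \<subseteq> opmap k 1"
    unfolding sobj_Sd_S2 using chain_mark_opmap by (auto simp: bary_chain_simplex)
  show "opmap k 1 \<subseteq> bary k ` sobj (Sd S2) k"
  proof
    fix g assume g: "g \<in> opmap k 1"
    then have "g = bary k (chain_simplex k (mark_chain k g))"
      by (simp add: bary_chain_simplex mark_chain_chains chain_mark_mark_chain)
    then show "g \<in> bary k ` sobj (Sd S2) k"
      unfolding sobj_Sd_S2 using mark_chain_chains[OF g] by blast
  qed
qed

section \<open>Non-singular quotients of the subdivision\<close>

context
  fixes R :: "nat \<Rightarrow> ((nat \<times> (nat \<Rightarrow> nat) option \<times> (nat \<Rightarrow> nat set)) set \<times>
                       (nat \<times> (nat \<Rightarrow> nat) option \<times> (nat \<Rightarrow> nat set)) set) set"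
  assumes R: "compat_eqrel (Sd S2) R" and ns: "nonsingular (squot (Sd S2) R)"
begin

lemma chain_simplex_rel_creindex:
  assumes "(chain_simplex k d, chain_simplex k d') \<in> R k" "d \<in> chains 2 k" "d' \<in> chains 2 k"
    "\<beta> \<in> opmap k' k"
  shows "(chain_simplex k' (creindex k' \<beta> d), chain_simplex k' (creindex k' \<beta> d')) \<in> R k'"
  using compat_eqrel_smap[OF R assms(4,1)] by (simp add: smap_chain_simplex assms(2-4))

text \<open>The key step: the vertices A and B of the triangle (A, B, [2]) are both the basepoint,
  so the triangle has to become degenerate in a non-singular quotient.\<close>
lemma triangle_degenerate:
  assumes A: "A \<noteq> {}" "A \<subseteq> B" "B \<subseteq> {0..2}" "B \<noteq> {0..2}"
  shows "(chain_simplex 2 (chain_of [A, B, {0..2}]), chain_simplex 2 (chain_of [A, A, {0..2}])) \<in> R 2 \<or>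
    (chain_simplex 2 (chain_of [A, B, {0..2}]), chain_simplex 2 (chain_of [A, B, B])) \<in> R 2"
proof -
  let ?d = "chain_of [A, B, {0..2}]"
  have d: "?d \<in> chains 2 2" using A order_trans[OF A(2,3)] by (intro chain_of_chains) auto
  then have t: "chain_simplex 2 ?d \<in> sobj (Sd S2) 2" by (auto simp: sobj_Sd_S2)
  have "(smap (Sd S2) 2 0 (vertex 0) (chain_simplex 2 ?d), smap (Sd S2) 2 0 (vertex 1) (chain_simplex 2 ?d))
      \<in> R 0"
    using compat_eqrel_refl[OF R sset_smap_closed[OF is_sset_Sd vertex_opmap t]] triangle_vertices_eq[OF A]
    by simp
  then obtain i where "i \<le> 1" and i: "(chain_simplex 2 ?d,
      smap (Sd S2) 1 2 (codegen 1 i) (smap (Sd S2) 2 1 (coface 1 (Suc i)) (chain_simplex 2 ?d))) \<in> R 2"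
    using nonsingular_squot_triangle[OF is_sset_Sd R ns t] by blast
  then have "(chain_simplex 2 ?d,
      chain_simplex 2 (creindex 2 (codegen 1 i) (creindex 1 (coface 1 (Suc i)) ?d))) \<in> R 2"
    using smap_chain_simplex[OF d coface_1_opmap]
      smap_chain_simplex[OF creindex_chains[OF d coface_1_opmap] codegen_1_opmap] by simp
  moreover have "i = 0 \<or> i = 1" using \<open>i \<le> 1\<close> by linarith
  ultimately show ?thesis by (auto simp: creindex_coface_chain_of creindex_codegen_chain_of)
qed

lemma triangle_collapse:
  assumes A: "A \<noteq> {}" "A \<subseteq> B" "B \<subseteq> {0..2}" "B \<noteq> {0..2}"
  shows "(chain_simplex 2 (chain_of [A, B, {0..2}]), chain_simplex 2 (chain_of [A, A, {0..2}])) \<in> R 2"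
    and "(chain_simplex 1 (chain_of [A, {0..2}]), chain_simplex 1 (chain_of [B, {0..2}])) \<in> R 1"
proof -
  let ?U = "{0..2::nat}"
  have "A \<subseteq> ?U" "B \<noteq> {}" using A by blast+
  then have ch: "chain_of [A, B, ?U] \<in> chains 2 2" "chain_of [A, A, ?U] \<in> chains 2 2"
    "chain_of [A, A, B] \<in> chains 2 2" "chain_of [A, B, B] \<in> chains 2 2"
    "chain_of [A, ?U] \<in> chains 2 1" "chain_of [A, B] \<in> chains 2 1" "chain_of [B, B] \<in> chains 2 1"
    using A by (intro chain_of_chains; simp)+
  have face: "(chain_simplex 1 (creindex 1 (coface 1 j) (chain_of [A, B, ?U])),
      chain_simplex 1 (creindex 1 (coface 1 j) d)) \<in> R 1"
    if "(chain_simplex 2 (chain_of [A, B, ?U]), chain_simplex 2 d) \<in> R 2" "d \<in> chains 2 2" for j d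
    using chain_simplex_rel_creindex[OF that(1) ch(1) that(2) coface_1_opmap] .
  from triangle_degenerate[OF A]
  have "(chain_simplex 2 (chain_of [A, B, ?U]), chain_simplex 2 (chain_of [A, A, ?U])) \<in> R 2 \<and>
      (chain_simplex 1 (chain_of [A, ?U]), chain_simplex 1 (chain_of [B, ?U])) \<in> R 1"
  proof
    assume h: "(chain_simplex 2 (chain_of [A, B, ?U]), chain_simplex 2 (chain_of [A, A, ?U])) \<in> R 2"
    have "(chain_simplex 1 (chain_of [B, ?U]), chain_simplex 1 (chain_of [A, ?U])) \<in> R 1"
      using face[OF h ch(2), of 0] by (simp add: creindex_coface_chain_of)
    then show ?thesis using h compat_eqrel_sym[OF R] by blast
  next
    assume h: "(chain_simplex 2 (chain_of [A, B, ?U]), chain_simplex 2 (chain_of [A, B, B])) \<in> R 2"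
    have "chain_simplex 1 (chain_of [B, B]) = chain_simplex 1 (chain_of [A, B])"
      using chain_simplex_eq_nonfull[OF ch(7) _ ch(6)] A(4) by (simp add: chain_of_def)
    then have h0: "(chain_simplex 1 (chain_of [B, ?U]), chain_simplex 1 (chain_of [A, B])) \<in> R 1"
      using face[OF h ch(4), of 0] by (simp add: creindex_coface_chain_of)
    have h1: "(chain_simplex 1 (chain_of [A, ?U]), chain_simplex 1 (chain_of [A, B])) \<in> R 1"
      using face[OF h ch(4), of 1] by (simp add: creindex_coface_chain_of)
    have "(chain_simplex 2 (chain_of [A, A, ?U]), chain_simplex 2 (chain_of [A, A, B])) \<in> R 2"
      using chain_simplex_rel_creindex[OF h1 ch(5,6) codegen_1_opmap[of 0]]
      by (simp add: creindex_codegen_chain_of)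
    moreover have "chain_simplex 2 (chain_of [A, B, B]) = chain_simplex 2 (chain_of [A, A, B])"
      using chain_simplex_eq_nonfull[OF ch(4) _ ch(3)] A(4) by (simp add: chain_of_def)
    ultimately have "(chain_simplex 2 (chain_of [A, B, ?U]), chain_simplex 2 (chain_of [A, A, ?U])) \<in> R 2"
      using compat_eqrel_trans[OF R h compat_eqrel_sym[OF R]] by simp
    moreover have "(chain_simplex 1 (chain_of [A, ?U]), chain_simplex 1 (chain_of [B, ?U])) \<in> R 1"
      using compat_eqrel_trans[OF R h1 compat_eqrel_sym[OF R h0]] .
    ultimately show ?thesis ..
  qed
  then show "(chain_simplex 2 (chain_of [A, B, ?U]), chain_simplex 2 (chain_of [A, A, ?U])) \<in> R 2"
    and "(chain_simplex 1 (chain_of [A, ?U]), chain_simplex 1 (chain_of [B, ?U])) \<in> R 1"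
    by blast+
qed

lemma edge_collapse:
  assumes S: "S \<noteq> {}" "S \<subseteq> {0..2}" "S \<noteq> {0..2}"
  shows "(chain_simplex 1 (chain_of [S, {0..2}]), chain_simplex 1 (chain_of [{0}, {0..2}])) \<in> R 1"
proof -
  let ?E = "\<lambda>X. chain_simplex 1 (chain_of [X, {0..2}])"
  obtain s where s: "s \<in> S" using S(1) by blast
  have "(if s = 1 then 2 else 1) \<notin> {0, s}" "(if s = 1 then 2 else 1) \<in> {0..2::nat}" by auto
  then have "{0, s} \<noteq> {0..2}" by metis
  moreover have "{0, s} \<subseteq> {0..2}" using s S(2) by auto
  ultimately have "(?E {s}, ?E S) \<in> R 1" "(?E {s}, ?E {0, s}) \<in> R 1" "(?E {0}, ?E {0, s}) \<in> R 1"
    using triangle_collapse(2) s S by auto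
  then show ?thesis
    by (meson compat_eqrel_sym[OF R] compat_eqrel_trans[OF R])
qed

lemma two_chain_collapse:
  assumes A: "A \<noteq> {}" "A \<subseteq> M" "M \<subseteq> {0..2}"
  shows "(chain_simplex 2 (chain_of [A, M, {0..2}]),
      chain_simplex 2 (mark_chain 2 (chain_mark 2 (chain_of [A, M, {0..2}])))) \<in> R 2"
proof -
  let ?U = "{0..2::nat}"
  have ch: "chain_of [A, ?U] \<in> chains 2 1" "chain_of [{0}, ?U] \<in> chains 2 1"
    "chain_of [A, M, ?U] \<in> chains 2 2"
  proof -
    have "A \<subseteq> ?U" "M \<noteq> {}" using A by blast+
    then show "chain_of [A, ?U] \<in> chains 2 1" "chain_of [{0}, ?U] \<in> chains 2 1"
      "chain_of [A, M, ?U] \<in> chains 2 2"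
      using A by (intro chain_of_chains; simp)+
  qed
  show ?thesis
  proof (cases "A = ?U")
    case True
    then have "M = ?U" using A by blast
    then show ?thesis
      using True compat_eqrel_refl[OF R] ch(3) by (simp add: mark_chain_chain_mark_chain_of sobj_Sd_S2)
  next
    case AU: False
    then have edge: "(chain_simplex 1 (chain_of [A, ?U]), chain_simplex 1 (chain_of [{0}, ?U])) \<in> R 1"
      using edge_collapse A order_trans[OF A(2,3)] by simp
    show ?thesis
    proof (cases "M = ?U")
      case True
      then show ?thesis
        using chain_simplex_rel_creindex[OF edge ch(1,2) codegen_1_opmap[of 1]] AU
        by (simp add: creindex_codegen_chain_of mark_chain_chain_mark_chain_of)
    next
      case False
      then have "(chain_simplex 2 (chain_of [A, M, ?U]), chain_simplex 2 (chain_of [A, A, ?U])) \<in> R 2"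
        using triangle_collapse(1) A by simp
      moreover have "(chain_simplex 2 (chain_of [A, A, ?U]), chain_simplex 2 (chain_of [{0}, {0}, ?U])) \<in> R 2"
        using chain_simplex_rel_creindex[OF edge ch(1,2) codegen_1_opmap[of 0]]
        by (simp add: creindex_codegen_chain_of)
      ultimately show ?thesis
        using compat_eqrel_trans[OF R] AU False by (simp add: mark_chain_chain_mark_chain_of)
    qed
  qed
qed

lemma chain_collapse:
  assumes d: "d \<in> chains 2 k"
  shows "(chain_simplex k d, chain_simplex k (mark_chain k (chain_mark k d))) \<in> R k"
proof -
  obtain \<beta> M where \<beta>: "\<beta> \<in> opmap k 2" and M: "d 0 \<subseteq> M" "M \<subseteq> {0..2}"
    and d_eq: "d = creindex k \<beta> (chain_of [d 0, M, {0..2}])"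
    using chains_2_factor[OF d] .
  let ?D = "chain_of [d 0, M, {0..2}]"
  have "d 0 \<noteq> {}" using chainsD(1)[OF d, of 0] by simp
  moreover have "d 0 \<subseteq> {0..2}" "M \<noteq> {}" using M \<open>d 0 \<noteq> {}\<close> by blast+
  ultimately have D: "?D \<in> chains 2 2" using M by (intro chain_of_chains; simp)
  have "mark_chain k (chain_mark k d) = creindex k \<beta> (mark_chain 2 (chain_mark 2 ?D))"
    by (subst d_eq) (simp add: chain_mark_creindex[OF \<beta>] mark_chain_ocomp[OF \<beta>])
  then show ?thesis
    using chain_simplex_rel_creindex[OF two_chain_collapse D _ \<beta>] chainsD(1)[OF d, of 0] M
      mark_chain_chains[OF chain_mark_opmap[OF D]] d_eq
    by simp
qed

lemma sker_bary_le: "sker (Sd S2) bary \<le> R"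
proof (rule le_funI, rule subsetI)
  fix k p assume "p \<in> sker (Sd S2) bary k"
  then obtain d d' where d: "d \<in> chains 2 k" "d' \<in> chains 2 k"
    and p: "p = (chain_simplex k d, chain_simplex k d')" and eq: "chain_mark k d = chain_mark k d'"
    by (auto simp: sker_def sobj_Sd_S2 bary_chain_simplex)
  show "p \<in> R k"
    using chain_collapse[OF d(1)] chain_collapse[OF d(2)] eq p
      compat_eqrel_trans[OF R _ compat_eqrel_sym[OF R]] by metis
qed

end

theorem mainTheorem10:
  shows "\<exists>f. sset_iso (Dsing (Sd (collapse (Delta 2) (bdry 2)))) (Delta 1) f"
proof -
  have "nonsingular (squot (Sd S2) (sker (Sd S2) bary))"
    using nonsingular_squot_sker[OF is_sset_Sd is_smap_bary] bary_surj by simp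
  moreover have "bary n ` sobj (Sd S2) n = sobj (Delta 1) n" for n
    by (simp only: bary_surj sobj_Delta)
  ultimately show ?thesis
    using Dsing_iso[OF is_sset_Sd is_smap_bary _ sker_bary_le] by blast
qed

end
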